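(* Let $Q\in\mathbb R^{m\times n}$ with $\mathrm{rank}(Q)=n$, $p\in\mathbb R^m$, $r>0$, and $\mathcal S=\{x\in\mathbb R^n:\|Qx-p\|_2\le r\}$ with $\mathcal S\cap\mathbb Z^n\neq\emptyset$. Let $\hat x$ be a boundary point of $\mathcal S$. Then $$\min_{x\in\mathcal S\cap\mathbb Z^n}\|x-\hat x\|_2\le 2\,\|Q(Q^TQ)^{-1}\|_2\,\mu(Q).$$ Moreover, for every $\alpha\in\mathbb R^n$, $$\min_{x\in\mathcal S\cap\mathbb Z^n}\alpha^Tx-\min_{x\in\mathcal S}\alpha^Tx\le 2\,\|Q(Q^TQ)^{-1}\|_2\,\|\alpha\|_2\,\mu(Q).$$
   Context: For $Q\in\mathbb R^{m\times n}$ of full column rank, $\mu(Q)$ denotes the covering radius of the lattice $Q\mathbb Z^n$: $\mu(Q)=\max_{x\in\mathbb R^n}\min_{z\in\mathbb Z^n}\|Qx-Qz\|_2$. $\|\cdot\|_2$ applied to a matrix is the spectral (operator) norm. *)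

theory Defs
  imports "HOL-Analysis.Analysis"
begin

definition int_vecs :: "(real ^ 'n) set" where
  "int_vecs = {z. \<forall>i. z $ i \<in> \<int>}"

definition covering_radius :: "real ^ 'n ^ 'm \<Rightarrow> real" where
  "covering_radius Q = (SUP x. INF z\<in>int_vecs. norm (Q *v x - Q *v z))"

definition spec_norm :: "real ^ 'n ^ 'm \<Rightarrow> real" where
  "spec_norm M = onorm (\<lambda>x. M *v x)"

end

theory Submission
  imports Defs
begin

(* Around the least-squares centre c the set S is the ellipsoid {x. norm (Q (x - c)) \<le> R}.
   Given x in S and t > mu(Q), pull x towards c into the ellipsoid of radius R - t; a lattice
   point within Q-distance t of that point stays in S and lies within Q-distance 2t of x
   (when R \<le> t any lattice point of S will do).  Since the transpose of Q (Q^T Q)^-1 is a left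
   inverse of Q, Q-distances bound Euclidean distances up to the factor
   spec_norm (Q (Q^T Q)^-1); the second estimate then follows by Cauchy-Schwarz. *)

lemma matrix_inv_inverse:
  fixes A :: "'a::semiring_1 ^ 'n ^ 'n"
  assumes "invertible A"
  shows "A ** matrix_inv A = mat 1 \<and> matrix_inv A ** A = mat 1"
  using assms unfolding invertible_def matrix_inv_def by (rule someI_ex)

lemma invertible_gram_matrix:
  fixes Q :: "real ^ 'n ^ 'm"
  assumes "rank Q = CARD('n)"
  shows "invertible (transpose Q ** Q)"
proof -
  have injQ: "inj ((*v) Q)" using assms full_rank_injective by blast
  have "inj ((*v) (transpose Q ** Q))"
  proof (rule injI)
    fix x y assume "(transpose Q ** Q) *v x = (transpose Q ** Q) *v y"
    then have "transpose Q *v (Q *v (x - y)) = 0"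
      by (simp add: matrix_vector_mul_assoc matrix_vector_mult_diff_distrib)
    then have "(Q *v (x - y)) \<bullet> (Q *v (x - y)) = 0"
      by (metis dot_lmul_matrix inner_zero_right vector_transpose_matrix)
    then have "Q *v x = Q *v y" by (simp add: matrix_vector_mult_diff_distrib)
    then show "x = y" using injQ by (simp add: inj_eq)
  qed
  then show ?thesis
    using matrix_left_invertible_injective invertible_left_inverse by blast
qed

lemma transpose_pinv_left_inverse:
  fixes Q :: "real ^ 'n ^ 'm"
  assumes "rank Q = CARD('n)"
  shows "transpose (Q ** matrix_inv (transpose Q ** Q)) ** Q = mat 1"
proof -
  define A where "A = transpose Q ** Q"
  define Ai where "Ai = matrix_inv A"
  have inv: "A ** Ai = mat 1" "Ai ** A = mat 1"
    using matrix_inv_inverse[OF invertible_gram_matrix[OF assms]]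
    unfolding A_def Ai_def by auto
  have "transpose Ai ** A = mat 1"
    by (metis inv(1) A_def matrix_transpose_mul transpose_mat transpose_transpose)
  then have "transpose Ai = Ai"
    by (metis inv(1) matrix_mul_assoc matrix_mul_lid matrix_mul_rid)
  then show ?thesis
    using inv(2) by (simp add: A_def Ai_def matrix_transpose_mul matrix_mul_assoc)
qed

lemma norm_matrix_vector_le_spec_norm:
  fixes M :: "real ^ 'n ^ 'm"
  shows "norm (M *v x) \<le> spec_norm M * norm x"
  unfolding spec_norm_def by (rule onorm) simp

lemma spec_norm_nonneg:
  fixes M :: "real ^ 'n ^ 'm"
  shows "0 \<le> spec_norm M"
  unfolding spec_norm_def by (rule onorm_pos_le) simp

lemma norm_le_spec_norm_mult_if_left_inverse:
  fixes Q B :: "real ^ 'n ^ 'm"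
  assumes "transpose B ** Q = mat 1"
  shows "norm v \<le> spec_norm B * norm (Q *v v)"
proof (cases "v = 0")
  case True
  then show ?thesis using spec_norm_nonneg by simp
next
  case False
  have "v = transpose B *v (Q *v v)"
    by (simp only: matrix_vector_mul_assoc assms matrix_vector_mul_lid)
  then have v: "v = (Q *v v) v* B" by simp
  have "norm v ^ 2 = v \<bullet> v" by (simp add: power2_norm_eq_inner)
  also have "\<dots> = ((Q *v v) v* B) \<bullet> v" by (subst (1) v) (rule refl)
  also have "\<dots> = (Q *v v) \<bullet> (B *v v)" by (rule dot_lmul_matrix)
  also have "\<dots> \<le> norm (Q *v v) * norm (B *v v)" by (rule norm_cauchy_schwarz)
  also have "\<dots> \<le> norm (Q *v v) * (spec_norm B * norm v)"
    by (rule mult_left_mono[OF norm_matrix_vector_le_spec_norm]) simp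
  finally have "norm v * norm v \<le> (spec_norm B * norm (Q *v v)) * norm v"
    by (simp add: power2_eq_square algebra_simps)
  then show ?thesis using False by simp
qed

lemma norm_le_spec_norm_pinv_mult:
  fixes Q :: "real ^ 'n ^ 'm"
  assumes "rank Q = CARD('n)"
  shows "norm v \<le> spec_norm (Q ** matrix_inv (transpose Q ** Q)) * norm (Q *v v)"
  using transpose_pinv_left_inverse[OF assms] by (rule norm_le_spec_norm_mult_if_left_inverse)

lemma bounded_ellipsoid:
  fixes Q :: "real ^ 'n ^ 'm"
  assumes "rank Q = CARD('n)"
  shows "bounded {y. norm (Q *v (y - c)) \<le> R}"
proof -
  let ?C = "spec_norm (Q ** matrix_inv (transpose Q ** Q))"
  have "norm (y - c) \<le> ?C * R" if "norm (Q *v (y - c)) \<le> R" for y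
    using order_trans[OF norm_le_spec_norm_pinv_mult[OF assms]
        mult_left_mono[OF that spec_norm_nonneg]] .
  then have "{y. norm (Q *v (y - c)) \<le> R} \<subseteq> cball c (?C * R)"
    by (auto simp: dist_norm norm_minus_commute)
  then show ?thesis using bounded_cball bounded_subset by blast
qed

lemma least_squares_pythagoras:
  fixes Q :: "real ^ 'n ^ 'm"
  assumes "transpose Q *v (Q *v c - p) = 0"
  shows "norm (Q *v y - p) ^ 2 = norm (Q *v (y - c)) ^ 2 + norm (Q *v c - p) ^ 2"
proof -
  have "(Q *v (y - c)) \<bullet> (Q *v c - p) = (y - c) \<bullet> (transpose Q *v (Q *v c - p))"
    by (metis dot_lmul_matrix vector_transpose_matrix)
  then have orth: "orthogonal (Q *v (y - c)) (Q *v c - p)"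
    using assms by (simp add: orthogonal_def)
  have "Q *v y - p = Q *v (y - c) + (Q *v c - p)"
    by (simp add: matrix_vector_mult_diff_distrib)
  then show ?thesis using norm_add_Pythagorean[OF orth] by metis
qed

lemma ellipsoid_recentre:
  fixes Q :: "real ^ 'n ^ 'm"
  assumes "rank Q = CARD('n)" and "r \<ge> 0"
  obtains c R where "\<And>y. norm (Q *v y - p) \<le> r \<longleftrightarrow> norm (Q *v (y - c)) \<le> R"
proof -
  define A where "A = transpose Q ** Q"
  define c where "c = matrix_inv A *v (transpose Q *v p)"
  have "A ** matrix_inv A = mat 1"
    using matrix_inv_inverse[OF invertible_gram_matrix[OF assms(1)]] unfolding A_def by auto
  then have "A *v c = transpose Q *v p"
    by (simp add: c_def matrix_vector_mul_assoc)
  then have normal_eq: "transpose Q *v (Q *v c - p) = 0"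
    by (simp add: A_def matrix_vector_mul_assoc matrix_vector_mult_diff_distrib)
  define D where "D = r ^ 2 - norm (Q *v c - p) ^ 2"
  have "norm (Q *v y - p) \<le> r \<longleftrightarrow> norm (Q *v (y - c)) \<le> sqrt D" for y
  proof -
    have "norm (Q *v y - p) \<le> r \<longleftrightarrow> norm (Q *v y - p) ^ 2 \<le> r ^ 2"
      using assms(2) abs_le_square_iff[of "norm (Q *v y - p)" r] by simp
    also have "\<dots> \<longleftrightarrow> norm (Q *v (y - c)) ^ 2 \<le> D"
      using least_squares_pythagoras[OF normal_eq, of y] D_def by linarith
    also have "\<dots> \<longleftrightarrow> norm (Q *v (y - c)) \<le> sqrt D"
      using real_sqrt_le_iff[of "norm (Q *v (y - c)) ^ 2" D] by simp
    finally show ?thesis .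
  qed
  then show ?thesis by (rule that)
qed

lemma zero_in_int_vecs: "0 \<in> int_vecs"
  unfolding int_vecs_def by simp

lemma covering_radius_bdd_above:
  fixes Q :: "real ^ 'n ^ 'm"
  shows "bdd_above (range (\<lambda>x. INF z\<in>int_vecs. norm (Q *v x - Q *v z)))"
proof (rule bdd_aboveI2)
  fix x :: "real ^ 'n"
  define zf :: "real ^ 'n" where "zf = (\<chi> i. of_int (floor (x $ i)))"
  have zf: "zf \<in> int_vecs" unfolding int_vecs_def zf_def by simp
  have "norm (x - zf) \<le> (\<Sum>i\<in>UNIV. \<bar>(x - zf) $ i\<bar>)" by (rule norm_le_l1_cart)
  also have "\<dots> \<le> (\<Sum>i\<in>(UNIV::'n set). 1)"
    by (rule sum_mono) (simp add: zf_def, linarith)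
  finally have dist_zf: "norm (x - zf) \<le> real CARD('n)" by simp
  have "(INF z\<in>int_vecs. norm (Q *v x - Q *v z)) \<le> norm (Q *v x - Q *v zf)"
    by (rule cINF_lower[OF _ zf]) (auto intro: bdd_belowI[of _ 0])
  also have "\<dots> = norm (Q *v (x - zf))" by (simp add: matrix_vector_mult_diff_distrib)
  also have "\<dots> \<le> spec_norm Q * norm (x - zf)" by (rule norm_matrix_vector_le_spec_norm)
  also have "\<dots> \<le> spec_norm Q * real CARD('n)"
    by (rule mult_left_mono[OF dist_zf spec_norm_nonneg])
  finally show "(INF z\<in>int_vecs. norm (Q *v x - Q *v z)) \<le> spec_norm Q * real CARD('n)" .
qed

lemma INF_lattice_dist_le_covering_radius:
  fixes Q :: "real ^ 'n ^ 'm"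
  shows "(INF z\<in>int_vecs. norm (Q *v y - Q *v z)) \<le> covering_radius Q"
  unfolding covering_radius_def by (rule cSUP_upper[OF _ covering_radius_bdd_above]) simp

lemma covering_radius_nonneg:
  fixes Q :: "real ^ 'n ^ 'm"
  shows "0 \<le> covering_radius Q"
proof -
  have "0 \<le> (INF z\<in>int_vecs. norm (Q *v 0 - Q *v z))"
    using zero_in_int_vecs by (intro cINF_greatest) auto
  then show ?thesis using INF_lattice_dist_le_covering_radius[of Q 0] by linarith
qed

lemma ex_int_vec_near:
  fixes Q :: "real ^ 'n ^ 'm"
  assumes "covering_radius Q < t"
  obtains z where "z \<in> int_vecs" "norm (Q *v (y - z)) < t"
proof -
  have "(INF z\<in>int_vecs. norm (Q *v y - Q *v z)) < t"
    using INF_lattice_dist_le_covering_radius assms by (rule le_less_trans)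
  moreover have "bdd_below ((\<lambda>z. norm (Q *v y - Q *v z)) ` int_vecs)"
    by (rule bdd_belowI2[of _ 0]) simp
  ultimately obtain z where "z \<in> int_vecs" "norm (Q *v y - Q *v z) < t"
    using cINF_less_iff[of int_vecs "\<lambda>z. norm (Q *v y - Q *v z)" t] zero_in_int_vecs
    by blast
  then show ?thesis using that by (simp add: matrix_vector_mult_diff_distrib)
qed

lemma ex_int_vec_in_ellipsoid_near:
  fixes Q :: "real ^ 'n ^ 'm"
  assumes z0: "z0 \<in> int_vecs" "norm (Q *v (z0 - c)) \<le> R"
    and x: "norm (Q *v (x - c)) \<le> R"
    and t: "covering_radius Q < t"
  obtains z where "z \<in> int_vecs" "norm (Q *v (z - c)) \<le> R" "norm (Q *v (z - x)) \<le> 2 * t"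
proof (cases "R \<le> t")
  case True
  have "Q *v (z0 - x) = Q *v (z0 - c) - Q *v (x - c)"
    by (simp add: matrix_vector_mult_diff_distrib)
  then have "norm (Q *v (z0 - x)) \<le> norm (Q *v (z0 - c)) + norm (Q *v (x - c))"
    by (metis norm_triangle_ineq4)
  then have "norm (Q *v (z0 - x)) \<le> 2 * t" using z0(2) x True by linarith
  with that[OF z0] show ?thesis .
next
  case False
  have t_nonneg: "t \<ge> 0" using t covering_radius_nonneg[of Q] by linarith
  define l where "l = (R - t) / R"
  define x' where "x' = c + l *\<^sub>R (x - c)"
  have l: "0 \<le> l" "l \<le> 1" "l * R = R - t" "(1 - l) * R = t"
    using False t_nonneg by (auto simp: l_def field_simps)
  have "norm (Q *v (x' - c)) = l * norm (Q *v (x - c))"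
    using l(1) by (simp add: x'_def matrix_vector_mult_scaleR)
  then have x'_c: "norm (Q *v (x' - c)) \<le> R - t"
    using mult_left_mono[OF x l(1)] l(3) by simp
  have "Q *v (x' - x) = (l - 1) *\<^sub>R (Q *v (x - c))"
    by (simp add: x'_def algebra_simps)
  then have "norm (Q *v (x' - x)) = (1 - l) * norm (Q *v (x - c))"
    using l(2) by simp
  then have x'_x: "norm (Q *v (x' - x)) \<le> t"
    using mult_left_mono[OF x, of "1 - l"] l(2,4) by simp
  obtain z where z: "z \<in> int_vecs" and z_x': "norm (Q *v (x' - z)) < t"
    using ex_int_vec_near[OF t] by blast
  have "Q *v (z - c) = Q *v (x' - c) - Q *v (x' - z)"
    "Q *v (z - x) = Q *v (x' - x) - Q *v (x' - z)"
    by (simp_all add: matrix_vector_mult_diff_distrib)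
  then have "norm (Q *v (z - c)) \<le> norm (Q *v (x' - c)) + norm (Q *v (x' - z))"
    "norm (Q *v (z - x)) \<le> norm (Q *v (x' - x)) + norm (Q *v (x' - z))"
    by (metis norm_triangle_ineq4)+
  then show ?thesis using that[OF z] x'_c x'_x z_x' by linarith
qed

lemma ex_int_vec_in_ellipsoid_close:
  fixes Q :: "real ^ 'n ^ 'm"
  assumes rank: "rank Q = CARD('n)"
    and "z0 \<in> int_vecs" "norm (Q *v (z0 - c)) \<le> R" "norm (Q *v (x - c)) \<le> R"
    and "covering_radius Q < t"
  obtains z where "z \<in> int_vecs" "norm (Q *v (z - c)) \<le> R"
    "norm (z - x) \<le> 2 * spec_norm (Q ** matrix_inv (transpose Q ** Q)) * t"
proof -
  let ?C = "spec_norm (Q ** matrix_inv (transpose Q ** Q))"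
  obtain z where z: "z \<in> int_vecs" "norm (Q *v (z - c)) \<le> R"
    and Qz: "norm (Q *v (z - x)) \<le> 2 * t"
    using ex_int_vec_in_ellipsoid_near assms(2-) by blast
  have "norm (z - x) \<le> ?C * (2 * t)"
    using order_trans[OF norm_le_spec_norm_pinv_mult[OF rank]
        mult_left_mono[OF Qz spec_norm_nonneg]] .
  then show ?thesis using that[OF z] by (simp add: ac_simps)
qed

lemma le_mult_if_le_mult_above:
  fixes a k \<mu> :: real
  assumes "k \<ge> 0" and le: "\<And>t. \<mu> < t \<Longrightarrow> a \<le> k * t"
  shows "a \<le> k * \<mu>"
proof (cases "k = 0")
  case True
  then show ?thesis using le[of "\<mu> + 1"] by simp
next
  case False
  then have k: "k > 0" using assms(1) by simp
  have "a / k \<le> \<mu>"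
  proof (rule dense_ge)
    fix t assume "\<mu> < t"
    then show "a / k \<le> t" using le[of t] k by (simp add: divide_le_eq mult.commute)
  qed
  then show ?thesis using k by (simp add: divide_le_eq mult.commute)
qed

lemma INF_norm_diff_le_if_near:
  fixes T :: "'a::real_normed_vector set"
  assumes "K \<ge> 0" and near: "\<And>t. \<mu> < t \<Longrightarrow> \<exists>z\<in>T. norm (z - x) \<le> K * t"
  shows "(INF z\<in>T. norm (z - x)) \<le> K * \<mu>"
proof (rule le_mult_if_le_mult_above[OF assms(1)])
  fix t assume "\<mu> < t"
  then obtain z where "z \<in> T" "norm (z - x) \<le> K * t" using near by blast
  moreover have "bdd_below ((\<lambda>z. norm (z - x)) ` T)" by (rule bdd_belowI2[of _ 0]) simp
  ultimately show "(INF z\<in>T. norm (z - x)) \<le> K * t" using cINF_lower order_trans by metis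
qed

lemma INF_inner_gap_le_if_near:
  fixes S T :: "'a::real_inner set"
  assumes "K \<ge> 0" "T \<subseteq> S" "bounded S" "S \<noteq> {}"
    and near: "\<And>x t. x \<in> S \<Longrightarrow> \<mu> < t \<Longrightarrow> \<exists>z\<in>T. norm (z - x) \<le> K * t"
  shows "(INF z\<in>T. \<alpha> \<bullet> z) - (INF x\<in>S. \<alpha> \<bullet> x) \<le> K * norm \<alpha> * \<mu>"
proof (rule le_mult_if_le_mult_above)
  show "0 \<le> K * norm \<alpha>" using assms(1) by simp
  fix t assume t: "\<mu> < t"
  have bdd: "bdd_below ((\<lambda>z. \<alpha> \<bullet> z) ` T)"
    using bounded_inner_imp_bdd_below[OF bounded_subset[OF assms(3,2)], of \<alpha>]
    by (simp add: inner_commute)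
  have "(INF z\<in>T. \<alpha> \<bullet> z) - K * norm \<alpha> * t \<le> \<alpha> \<bullet> x" if "x \<in> S" for x
  proof -
    obtain z where z: "z \<in> T" "norm (z - x) \<le> K * t" using near[OF \<open>x \<in> S\<close> t] by blast
    have "(INF z\<in>T. \<alpha> \<bullet> z) \<le> \<alpha> \<bullet> x + \<alpha> \<bullet> (z - x)"
      using cINF_lower[OF bdd z(1)] by (simp add: inner_diff_right)
    also have "\<alpha> \<bullet> (z - x) \<le> norm \<alpha> * norm (z - x)" by (rule norm_cauchy_schwarz)
    also have "\<dots> \<le> norm \<alpha> * (K * t)" by (rule mult_left_mono[OF z(2)]) simp
    finally show ?thesis by (simp add: ac_simps)
  qed
  then have "(INF z\<in>T. \<alpha> \<bullet> z) - K * norm \<alpha> * t \<le> (INF x\<in>S. \<alpha> \<bullet> x)"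
    using assms(4) by (intro cINF_greatest)
  then show "(INF z\<in>T. \<alpha> \<bullet> z) - (INF x\<in>S. \<alpha> \<bullet> x) \<le> K * norm \<alpha> * t" by simp
qed

theorem proposition6p1:
  fixes Q :: "real ^ 'n ^ 'm" and p :: "real ^ 'm" and r :: real
    and S :: "(real ^ 'n) set" and xhat :: "real ^ 'n"
  assumes rank: "rank Q = CARD('n)"
    and r_pos: "r > 0"
    and S_def: "S = {x. norm (Q *v x - p) \<le> r}"
    and nonempty: "S \<inter> int_vecs \<noteq> {}"
    and bdry: "xhat \<in> frontier S"
  shows "(INF z\<in>S \<inter> int_vecs. norm (z - xhat))
           \<le> 2 * spec_norm (Q ** matrix_inv (transpose Q ** Q)) * covering_radius Q
         \<and> (\<forall>\<alpha> :: real ^ 'n.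
           (INF z\<in>S \<inter> int_vecs. \<alpha> \<bullet> z) - (INF x\<in>S. \<alpha> \<bullet> x)
             \<le> 2 * spec_norm (Q ** matrix_inv (transpose Q ** Q)) * norm \<alpha> * covering_radius Q)"
proof -
  let ?C = "spec_norm (Q ** matrix_inv (transpose Q ** Q))"
  have twice_C_nonneg: "0 \<le> 2 * ?C" using spec_norm_nonneg by simp
  obtain z0 where z0: "z0 \<in> S" "z0 \<in> int_vecs" using nonempty by blast
  obtain c R where "\<And>y. norm (Q *v y - p) \<le> r \<longleftrightarrow> norm (Q *v (y - c)) \<le> R"
    using ellipsoid_recentre[OF rank less_imp_le[OF r_pos]] by blast
  then have S_eq: "S = {y. norm (Q *v (y - c)) \<le> R}" unfolding S_def by simp
  have near: "\<exists>z\<in>S \<inter> int_vecs. norm (z - x) \<le> 2 * ?C * t"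
    if "x \<in> S" "covering_radius Q < t" for x t
    using ex_int_vec_in_ellipsoid_close[OF rank z0(2) _ _ that(2), of c R x] z0(1) that(1)
    unfolding S_eq by blast
  have "bounded S" unfolding S_eq by (rule bounded_ellipsoid[OF rank])
  have "closed S" unfolding S_def by (intro closed_Collect_le continuous_intros)
  then have "xhat \<in> S" using bdry frontier_subset_closed by blast
  show ?thesis
    using INF_norm_diff_le_if_near[OF twice_C_nonneg near[OF \<open>xhat \<in> S\<close>]]
      INF_inner_gap_le_if_near[OF twice_C_nonneg Int_lower1 \<open>bounded S\<close> _ near] z0
    by blast
qed

end
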